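(* Suppose the constraint qualification below holds, let $\{(x^k,y^k,z^k)\}$ be generated by Algorithm G-ADMM-M with parameters $\sigma>0$, $\rho\in(0,2)$, and let $(\bar x,\bar y,\bar z)\in\mathbb{W}^*$. Then for every integer $k\ge0$, $$\Psi_k(\bar x,\bar y,\bar z)-\Psi_{k+1}(\bar x,\bar y,\bar z)\ \ge\ \theta_k+\sigma(2-\rho)\|\mathcal{A}^*x^k+\mathcal{B}^*y^k-c\|^2,$$ where $\Psi_k$ and $\theta_k$ are defined below.
   Context: Let $\mathbb{X},\mathbb{Y},\mathbb{Z}$ be finite-dimensional real Euclidean spaces with inner product $\langle\cdot,\cdot\rangle$ and induced norm $\|\cdot\|$. For a self-adjoint linear operator $\mathcal{G}$, $\|u\|_{\mathcal G}^2:=\langle u,\mathcal G u\rangle$. Let $f_1:\mathbb{X}\to\mathbb{R}$ and $h_1:\mathbb{Y}\to\mathbb{R}$ be convex, continuously differentiable with globally Lipschitz continuous gradients, and $f_2:\mathbb{X}\to(-\infty,+\infty]$, $h_2:\mathbb{Y}\to(-\infty,+\infty]$ closed proper convex. Let $\mathcal{A}:\mathbb{Z}\to\mathbb{X}$, $\mathcal{B}:\mathbb{Z}\to\mathbb{Y}$ be linear with adjoints $\mathcal{A}^*,\mathcal{B}^*$, and $c\in\mathbb{Z}$. The problem is $\min\{f_1(x)+f_2(x)+h_1(y)+h_2(y): \mathcal{A}^*x+\mathcal{B}^*y=c\}$. Let $\Sigma_{f_1}\preceq\widehat\Sigma_{f_1}$ be self-adjoint positive semidefinite operators on $\mathbb{X}$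 with $\tfrac12\|x-x'\|_{\Sigma_{f_1}}^2\le f_1(x)-f_1(x')-\langle x-x',\nabla f_1(x')\rangle\le\tfrac12\|x-x'\|_{\widehat\Sigma_{f_1}}^2$ for all $x,x'$, and likewise $\Sigma_{h_1}\preceq\widehat\Sigma_{h_1}$ on $\mathbb{Y}$ for $h_1$. Constraint qualification: there exists $(x^0,y^0)\in\operatorname{ri}(\operatorname{dom}f_2\times\operatorname{dom}h_2)$ with $\mathcal{A}^*x^0+\mathcal{B}^*y^0=c$. $\mathbb{W}^*$ denotes the set of $(\bar x,\bar y,\bar z)\in\mathbb{X}\times\mathbb{Y}\times\mathbb{Z}$ with $0\in\partial f_2(\bar x)+\nabla f_1(\bar x)+\mathcal{A}\bar z$, $0\in\partial h_2(\bar y)+\nabla h_1(\bar y)+\mathcal{B}\bar z$, $\mathcal{A}^*\bar x+\mathcal{B}^*\bar y=c$. Algorithm G-ADMM-M: choose $\sigma>0$, $\rho\in(0,2)$, self-adjoint positive semidefinite $\mathcal S$ on $\mathbb{X}$ and $\mathcal T$ on $\mathbb{Y}$ such that $\mathcal F:=\widehat\Sigma_{f_1}+\mathcal S+\sigma\mathcal{A}\mathcal{A}^*\succ0$ and $\mathcal H:=\widehat\Sigma_{h_1}+\mathcal T+\sigma\mathcal{B}\mathcal{B}^*\succ0$, and $\widetilde\omega^0=(\widetilde x^0,\widetilde y^0,\widetilde z^0)\in\operatorname{dom}f_2\times\operatorname{dom}h_2\times\mathbb{Z}$. For $k=0,1,2,\dots$: $x^k=\arg\min_x\{f_2(x)+\tfrac12\langle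 x,\mathcal F x\rangle+\langle\nabla f_1(\widetilde x^k)+\sigma\mathcal{A}(\mathcal{A}^*\widetilde x^k+\mathcal{B}^*\widetilde y^k-c+\sigma^{-1}\widetilde z^k)-\mathcal F\widetilde x^k,x\rangle\}$; $z^k=\widetilde z^k+\sigma(\mathcal{A}^*x^k+\mathcal{B}^*\widetilde y^k-c)$; $y^k=\arg\min_y\{h_2(y)+\tfrac12\langle y,\mathcal H y\rangle+\langle\nabla h_1(\widetilde y^k)+\sigma\mathcal{B}(\mathcal{A}^*x^k+\mathcal{B}^*\widetilde y^k-c+\sigma^{-1}z^k)-\mathcal H\widetilde y^k,y\rangle\}$; $\widetilde\omega^{k+1}=\widetilde\omega^k+\rho(\omega^k-\widetilde\omega^k)$ where $\omega^k=(x^k,y^k,z^k)$, $\widetilde\omega^k=(\widetilde x^k,\widetilde y^k,\widetilde z^k)$. Notation: for fixed $(\bar x,\bar y,\bar z)$, $x_e^k:=x^k-\bar x$, $y_e^k:=y^k-\bar y$, $z_e^k:=z^k-\bar z$, $\widetilde x_e^k:=\widetilde x^k-\bar x$, $\widetilde y_e^k:=\widetilde y^k-\bar y$. Define $\Psi_k(\bar x,\bar y,\bar z):=\frac{1}{\sigma\rho}\|z_e^k+\sigma(\rho-1)\mathcal{A}^*x_e^k\|^2+\sigma(2-\rho)\|\mathcal{A}^*x_e^k\|^2+\frac1\rho\|\widetilde x_e^{k+1}\|^2_{\widehat\Sigma_{f_1}+\mathcal S}+\frac1\rho\|\widetilde y_e^{k}\|^2_{\widehat\Sigma_{h_1}+\mathcal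 T}$, $\theta_k:=\|\widetilde x^{k+1}-x^{k+1}\|^2_{\frac12\Sigma_{f_1}-\widehat\Sigma_{f_1}+(2-\rho)(\widehat\Sigma_{f_1}+\mathcal S)}+\|\widetilde y^{k}-y^{k}\|^2_{\frac12\Sigma_{h_1}-\widehat\Sigma_{h_1}+(2-\rho)(\widehat\Sigma_{h_1}+\mathcal T)}$ (here $\|u\|^2_{\mathcal G}:=\langle u,\mathcal G u\rangle$ even if $\mathcal G$ is not semidefinite). *)

theory Defs
  imports "HOL-Analysis.Analysis"
begin

text \<open>Quadratic form  \<open>\<parallel>u\<parallel>\<^sub>G\<^sup>2 = \<langle>u, G u\<rangle>\<close> (also for non-semidefinite G).\<close>
definition qf :: "('a::real_inner \<Rightarrow> 'a) \<Rightarrow> 'a \<Rightarrow> real" where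
  "qf G u = u \<bullet> G u"

definition self_adjoint_op :: "('a::real_inner \<Rightarrow> 'a) \<Rightarrow> bool" where
  "self_adjoint_op G \<longleftrightarrow> linear G \<and> (\<forall>u v. G u \<bullet> v = u \<bullet> G v)"

definition psd_op :: "('a::real_inner \<Rightarrow> 'a) \<Rightarrow> bool" where
  "psd_op G \<longleftrightarrow> self_adjoint_op G \<and> (\<forall>u. 0 \<le> u \<bullet> G u)"

definition pd_op :: "('a::real_inner \<Rightarrow> 'a) \<Rightarrow> bool" where
  "pd_op G \<longleftrightarrow> self_adjoint_op G \<and> (\<forall>u. u \<noteq> 0 \<longrightarrow> 0 < u \<bullet> G u)"

text \<open>A closed proper convex function \<open>X \<rightarrow> (-\<infinity>,+\<infinity>]\<close> is represented by its
  (nonempty, convex) effective domain D and its real values on D (the value is +\<infinity> off D).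
  Closedness = closedness of the epigraph.\<close>
definition closed_proper_convex :: "'a::real_normed_vector set \<Rightarrow> ('a \<Rightarrow> real) \<Rightarrow> bool" where
  "closed_proper_convex D f \<longleftrightarrow> D \<noteq> {} \<and> convex D \<and> convex_on D f \<and>
     closed {(x, t). x \<in> D \<and> f x \<le> t}"

definition subdiff :: "'a::real_inner set \<Rightarrow> ('a \<Rightarrow> real) \<Rightarrow> 'a \<Rightarrow> 'a set" where
  "subdiff D f x = {g. x \<in> D \<and> (\<forall>y\<in>D. f x + g \<bullet> (y - x) \<le> f y)}"

definition is_argmin_on :: "'a set \<Rightarrow> ('a \<Rightarrow> real) \<Rightarrow> 'a \<Rightarrow> bool" where
  "is_argmin_on D \<phi> u \<longleftrightarrow> u \<in> D \<and> (\<forall>v\<in>D. \<phi> u \<le> \<phi> v)"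

definition smooth_convex :: "('a::real_inner \<Rightarrow> real) \<Rightarrow> ('a \<Rightarrow> 'a) \<Rightarrow> bool" where
  "smooth_convex f g \<longleftrightarrow> convex_on UNIV f \<and>
     (\<forall>x. (f has_derivative (\<lambda>h. g x \<bullet> h)) (at x)) \<and>
     (\<exists>L. \<forall>x x'. norm (g x - g x') \<le> L * norm (x - x'))"

end

theory Submission
  imports Defs
begin

text \<open>Both subproblems are linearized proximal steps, so their optimality conditions are
  subgradient inclusions for \<open>f\<^sub>2\<close> and \<open>h\<^sub>2\<close>; monotonicity of the subdifferential against the
  KKT inclusions gives an inner-product inequality for each block. In it the gradient term is
  bounded below by the three-point inequality implied by the two-sided bounds on \<open>f\<^sub>1\<close>
  (resp. \<open>h\<^sub>1\<close>) and the parallelogram law, and the proximal term becomes, through the relaxation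
  step, the decrease of the corresponding \<open>1/\<rho>\<close>-weighted term of \<open>\<Psi>\<close>. What is left are inner
  products of multipliers with \<open>A\<^sup>*\<close>- and \<open>B\<^sup>*\<close>-errors; by an exact algebraic identity using only
  the multiplier update, the relaxation and feasibility of \<open>(x\<^sub>b, y\<^sub>b)\<close>, they equal the decrease
  of the multiplier part of \<open>\<Psi>\<close> minus the residual term.\<close>

lemma self_adjoint_op_linear: "self_adjoint_op G \<Longrightarrow> linear G"
  by (simp add: self_adjoint_op_def)

lemma self_adjoint_op_inner: "self_adjoint_op G \<Longrightarrow> G u \<bullet> v = u \<bullet> G v"
  by (simp add: self_adjoint_op_def)

lemma psd_op_self_adjoint: "psd_op G \<Longrightarrow> self_adjoint_op G"
  by (simp add: psd_op_def)

lemma self_adjoint_op_add: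
  assumes "self_adjoint_op G" "self_adjoint_op H"
  shows "self_adjoint_op (\<lambda>u. G u + H u)"
  using assms unfolding self_adjoint_op_def
  by (simp add: linear_compose_add inner_add_left inner_add_right)

lemma qf_uminus: "linear G \<Longrightarrow> qf G (- u) = qf G u"
  by (simp add: qf_def linear_neg)

lemma qf_add_scaleR:
  assumes "self_adjoint_op G"
  shows "qf G (v + s *\<^sub>R w) = qf G v + 2 * s * (v \<bullet> G w) + s\<^sup>2 * qf G w"
proof -
  have "w \<bullet> G v = v \<bullet> G w"
    using self_adjoint_op_inner[OF assms, of w v] by (simp add: inner_commute)
  then show ?thesis
    using self_adjoint_op_linear[OF assms] unfolding qf_def
    by (simp add: linear_add linear_cmul inner_add_left inner_add_right power2_eq_square algebra_simps)
qed

lemma psd_op_qf_diff_le: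
  assumes "psd_op G"
  shows "qf G (a - b) \<le> 2 * qf G a + 2 * qf G b"
proof -
  have "0 \<le> qf G (a + b)" using assms by (simp add: psd_op_def qf_def)
  moreover have "qf G (a + b) + qf G (a - b) = 2 * qf G a + 2 * qf G b"
    using qf_add_scaleR[OF psd_op_self_adjoint[OF assms], of a 1 b]
      qf_add_scaleR[OF psd_op_self_adjoint[OF assms], of a "-1" b] by simp
  ultimately show ?thesis by linarith
qed

lemma qf_relaxation:
  assumes "self_adjoint_op G" "\<rho> \<noteq> 0"
  shows "(1/\<rho>) * qf G u - (1/\<rho>) * qf G (u + \<rho> *\<^sub>R d) = - 2 * (u \<bullet> G d) - \<rho> * qf G d"
  using assms(2) unfolding qf_add_scaleR[OF assms(1)] by (simp add: field_simps power2_eq_square)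

lemma nonneg_if_nonneg_perturbed:
  fixes a b :: real
  assumes "\<And>t. 0 < t \<Longrightarrow> t \<le> 1 \<Longrightarrow> 0 \<le> a + t * b"
  shows "0 \<le> a"
proof (rule ccontr)
  assume "\<not> 0 \<le> a"
  define t where "t = min 1 (- a / (\<bar>b\<bar> + 1))"
  have t: "0 < t" "t \<le> 1" using \<open>\<not> 0 \<le> a\<close> by (auto simp: t_def divide_neg_pos)
  have "t * b \<le> (- a / (\<bar>b\<bar> + 1)) * \<bar>b\<bar>"
    using t by (intro order.trans[OF abs_ge_self[of "t * b", unfolded abs_mult] mult_right_mono])
      (auto simp: t_def)
  also have "\<dots> < - a" using \<open>\<not> 0 \<le> a\<close> by (simp add: field_simps)
  finally show False using assms[OF t] by linarith
qed

lemma argmin_quadratic_subdiff: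
  assumes D: "convex D" and f: "convex_on D f" and F: "self_adjoint_op F"
    and x: "is_argmin_on D (\<lambda>u. f u + (1/2) * (u \<bullet> F u) + l \<bullet> u) x"
  shows "- (F x + l) \<in> subdiff D f x"
proof -
  have xD: "x \<in> D" using x by (simp add: is_argmin_on_def)
  have "f x + (- (F x + l)) \<bullet> (u - x) \<le> f u" if uD: "u \<in> D" for u
  proof -
    define w where "w = u - x"
    have "0 \<le> (f u - f x + (F x + l) \<bullet> w) + t * ((w \<bullet> F w) / 2)" if t: "0 < t" "t \<le> 1" for t
    proof -
      have p: "x + t *\<^sub>R w = (1 - t) *\<^sub>R x + t *\<^sub>R u" by (simp add: w_def algebra_simps)
      have "x + t *\<^sub>R w \<in> D" unfolding p using t xD uD D by (intro convexD) auto
      then have "f x + (1/2) * (x \<bullet> F x) + l \<bullet> x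
          \<le> f (x + t *\<^sub>R w) + (1/2) * qf F (x + t *\<^sub>R w) + l \<bullet> (x + t *\<^sub>R w)"
        using x by (simp add: is_argmin_on_def qf_def)
      moreover have "f (x + t *\<^sub>R w) \<le> (1 - t) * f x + t * f u"
        unfolding p using convex_onD[OF f, of t x u] t xD uD by auto
      moreover have "x \<bullet> F w = F x \<bullet> w" using self_adjoint_op_inner[OF F, of x w] by simp
      ultimately have "0 \<le> t * ((f u - f x + (F x + l) \<bullet> w) + t * ((w \<bullet> F w) / 2))"
        unfolding qf_add_scaleR[OF F] by (simp add: qf_def inner_add_left inner_add_right
            power2_eq_square algebra_simps)
      then show ?thesis using t by (simp add: zero_le_mult_iff)
    qed
    then have "0 \<le> f u - f x + (F x + l) \<bullet> w" by (rule nonneg_if_nonneg_perturbed)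
    then show ?thesis by (simp add: w_def inner_add_left inner_diff_left)
  qed
  then show ?thesis using xD by (simp add: subdiff_def)
qed

lemma subdiff_monotone:
  assumes "g \<in> subdiff D f x" "g' \<in> subdiff D f x'"
  shows "0 \<le> (g - g') \<bullet> (x - x')"
proof -
  have "f x + g \<bullet> (x' - x) \<le> f x'" "f x' + g' \<bullet> (x - x') \<le> f x"
    using assms by (auto simp: subdiff_def)
  then show ?thesis by (simp add: inner_diff_left inner_diff_right inner_commute algebra_simps)
qed

lemma gradient_three_point:
  assumes lin: "linear \<Sigma>"
    and lower: "\<And>u u'. (1/2) * qf \<Sigma> (u - u') \<le> \<phi> u - \<phi> u' - (u - u') \<bullet> g u'"
    and upper: "\<And>u u'. \<phi> u - \<phi> u' - (u - u') \<bullet> g u' \<le> (1/2) * qf \<Sigma>' (u - u')"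
  shows "(1/2) * qf \<Sigma> (u - ub) + (1/2) * qf \<Sigma> (ut - ub) - (1/2) * qf \<Sigma>' (u - ut)
    \<le> (g ut - g ub) \<bullet> (u - ub)"
proof -
  have "qf \<Sigma> (ub - ut) = qf \<Sigma> (ut - ub)" using qf_uminus[OF lin, of "ut - ub"] by simp
  then show ?thesis
    using upper[of u ut] lower[of ub ut] lower[of u ub]
    by (simp add: inner_diff_left inner_diff_right inner_commute algebra_simps)
qed

lemma linearized_prox_step_optimality:
  fixes M :: "'z::euclidean_space \<Rightarrow> 'a::euclidean_space"
  assumes D: "convex D" and f: "convex_on D f" and linM: "linear M" and linP: "linear P"
    and F: "self_adjoint_op (\<lambda>u. P u + \<sigma> *\<^sub>R M (adjoint M u))" and \<sigma>: "\<sigma> \<noteq> 0"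
    and step: "is_argmin_on D
       (\<lambda>u. f u + (1/2) * (u \<bullet> (P u + \<sigma> *\<^sub>R M (adjoint M u)))
          + (g ut + \<sigma> *\<^sub>R M (v + (1/\<sigma>) *\<^sub>R w) - (P ut + \<sigma> *\<^sub>R M (adjoint M ut))) \<bullet> u) u"
    and kkt: "- (g ub + M zb) \<in> subdiff D f ub"
  shows "(g ut - g ub) \<bullet> (u - ub) + (w + \<sigma> *\<^sub>R (v + adjoint M (u - ut)) - zb) \<bullet> adjoint M (u - ub)
    + P (u - ut) \<bullet> (u - ub) \<le> 0"
proof -
  define z' where "z' = w + \<sigma> *\<^sub>R (v + adjoint M (u - ut))"
  have eq: "(P u + \<sigma> *\<^sub>R M (adjoint M u))
      + (g ut + \<sigma> *\<^sub>R M (v + (1/\<sigma>) *\<^sub>R w) - (P ut + \<sigma> *\<^sub>R M (adjoint M ut)))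
      = g ut + M z' + P (u - ut)"
    unfolding z'_def using \<sigma>
    by (simp add: linear_add[OF linM] linear_diff[OF linM] linear_cmul[OF linM]
        linear_diff[OF linP] linear_diff[OF adjoint_linear[OF linM]] algebra_simps)
  have "- (g ut + M z' + P (u - ut)) \<in> subdiff D f u"
    using argmin_quadratic_subdiff[OF D f F step] unfolding eq .
  from subdiff_monotone[OF this kkt]
  have "(g ut - g ub) \<bullet> (u - ub) + M (z' - zb) \<bullet> (u - ub) + P (u - ut) \<bullet> (u - ub) \<le> 0"
    by (simp add: linear_diff[OF linM] inner_diff_left inner_add_left algebra_simps)
  then show ?thesis
    unfolding z'_def[symmetric] by (simp add: adjoint_clauses[OF linM])
qed

lemma linearized_prox_step_descent:
  fixes M :: "'z::euclidean_space \<Rightarrow> 'a::euclidean_space"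
  assumes D: "convex D" and f: "convex_on D f" and linM: "linear M"
    and \<Sigma>: "psd_op \<Sigma>" and \<Sigma>': "linear \<Sigma>'" and P: "self_adjoint_op P"
    and F: "self_adjoint_op (\<lambda>u. P u + \<sigma> *\<^sub>R M (adjoint M u))" and \<sigma>: "\<sigma> \<noteq> 0" and \<rho>: "\<rho> \<noteq> 0"
    and bounds: "\<And>u u'. (1/2) * qf \<Sigma> (u - u') \<le> \<phi> u - \<phi> u' - (u - u') \<bullet> g u'
                          \<and> \<phi> u - \<phi> u' - (u - u') \<bullet> g u' \<le> (1/2) * qf \<Sigma>' (u - u')"
    and step: "is_argmin_on D
       (\<lambda>u. f u + (1/2) * (u \<bullet> (P u + \<sigma> *\<^sub>R M (adjoint M u)))
          + (g ut + \<sigma> *\<^sub>R M (v + (1/\<sigma>) *\<^sub>R w) - (P ut + \<sigma> *\<^sub>R M (adjoint M ut))) \<bullet> u) u"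
    and residual: "v + adjoint M (u - ut) = r"
    and kkt: "- (g ub + M zb) \<in> subdiff D f ub"
  shows "qf (\<lambda>d. (1/2) *\<^sub>R \<Sigma> d - \<Sigma>' d + (2 - \<rho>) *\<^sub>R P d) (ut - u)
      + 2 * ((w + \<sigma> *\<^sub>R r - zb) \<bullet> adjoint M (u - ub))
    \<le> (1/\<rho>) * qf P (ut - ub) - (1/\<rho>) * qf P (ut + \<rho> *\<^sub>R (u - ut) - ub)"
proof -
  define d where "d = u - ut"
  have lin\<Sigma>: "linear \<Sigma>" and linP: "linear P"
    using self_adjoint_op_linear psd_op_self_adjoint \<Sigma> P by blast+
  have opt: "(g ut - g ub) \<bullet> (u - ub) + (w + \<sigma> *\<^sub>R r - zb) \<bullet> adjoint M (u - ub) + P d \<bullet> (u - ub) \<le> 0"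
    using linearized_prox_step_optimality[OF D f linM linP F \<sigma> step kkt]
    unfolding residual d_def .
  have three_point: "(1/2) * qf \<Sigma> (u - ub) + (1/2) * qf \<Sigma> (ut - ub) - (1/2) * qf \<Sigma>' d
      \<le> (g ut - g ub) \<bullet> (u - ub)"
    unfolding d_def using gradient_three_point[OF lin\<Sigma>] bounds by blast
  have "qf \<Sigma> d \<le> 2 * qf \<Sigma> (u - ub) + 2 * qf \<Sigma> (ut - ub)"
    using psd_op_qf_diff_le[OF \<Sigma>, of "u - ub" "ut - ub"] by (simp add: d_def)
  moreover have "(1/\<rho>) * qf P (ut - ub) - (1/\<rho>) * qf P (ut + \<rho> *\<^sub>R (u - ut) - ub)
      = - 2 * ((ut - ub) \<bullet> P d) - \<rho> * qf P d"
    using qf_relaxation[OF P \<rho>, of "ut - ub" d] by (simp add: d_def algebra_simps)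
  moreover have "P d \<bullet> (u - ub) = (ut - ub) \<bullet> P d + qf P d"
    using self_adjoint_op_inner[OF P, of d "ut - ub"]
    by (simp add: d_def qf_def inner_diff_right inner_commute algebra_simps)
  moreover have "qf (\<lambda>d. (1/2) *\<^sub>R \<Sigma> d - \<Sigma>' d + (2 - \<rho>) *\<^sub>R P d) (ut - u)
      = (1/2) * qf \<Sigma> d - qf \<Sigma>' d + 2 * qf P d - \<rho> * qf P d"
  proof -
    have "ut - u = - d" by (simp add: d_def)
    show ?thesis unfolding \<open>ut - u = - d\<close>
      by (simp add: qf_def linear_neg[OF lin\<Sigma>] linear_neg[OF \<Sigma>'] linear_neg[OF linP]
          inner_add_right inner_diff_right algebra_simps)
  qed
  ultimately show ?thesis using opt three_point by linarith
qed

lemma multiplier_residual_identity: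
  fixes zk z1 zb w a a' b bt r :: "'z::real_inner"
  assumes \<sigma>: "\<sigma> \<noteq> 0" and \<rho>: "\<rho> \<noteq> 0"
    and zk: "zk - zb = w + \<sigma> *\<^sub>R (a + bt)"
    and z1: "z1 - zb = w + (\<rho> * \<sigma>) *\<^sub>R (a + bt) + \<sigma> *\<^sub>R (a' + bt + \<rho> *\<^sub>R (b - bt))"
    and r: "r = a + b"
  shows "(1 / (\<sigma> * \<rho>)) * (norm ((zk - zb) + (\<sigma> * (\<rho> - 1)) *\<^sub>R a))\<^sup>2 + \<sigma> * (2 - \<rho>) * (norm a)\<^sup>2
    - ((1 / (\<sigma> * \<rho>)) * (norm ((z1 - zb) + (\<sigma> * (\<rho> - 1)) *\<^sub>R a'))\<^sup>2 + \<sigma> * (2 - \<rho>) * (norm a')\<^sup>2)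
    = \<sigma> * (2 - \<rho>) * (norm r)\<^sup>2 - 2 * ((z1 - zb) \<bullet> a') - 2 * ((zk + \<sigma> *\<^sub>R r - zb) \<bullet> b)"
proof -
  have "zk + \<sigma> *\<^sub>R r - zb = w + \<sigma> *\<^sub>R (a + bt) + \<sigma> *\<^sub>R (a + b)"
    using zk r by (simp add: algebra_simps)
  then show ?thesis
    unfolding zk z1 r using \<sigma> \<rho>
    by (simp add: power2_norm_eq_inner inner_add_left inner_add_right inner_diff_left
        inner_diff_right inner_commute field_simps)
qed

lemma gadmm_multiplier_identity:
  fixes A :: "'z::euclidean_space \<Rightarrow> 'x::euclidean_space" and B :: "'z \<Rightarrow> 'y::euclidean_space"
  assumes linA: "linear A" and linB: "linear B" and \<sigma>: "\<sigma> \<noteq> 0" and \<rho>: "\<rho> \<noteq> 0"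
    and zstep: "\<And>k. z k = zt k + \<sigma> *\<^sub>R (adjoint A (x k) + adjoint B (yt k) - c)"
    and relax_y: "\<And>k. yt (Suc k) = yt k + \<rho> *\<^sub>R (y k - yt k)"
    and relax_z: "\<And>k. zt (Suc k) = zt k + \<rho> *\<^sub>R (z k - zt k)"
    and feasible: "adjoint A xb + adjoint B yb = c"
  shows "(1 / (\<sigma> * \<rho>)) * (norm ((z k - zb) + (\<sigma> * (\<rho> - 1)) *\<^sub>R adjoint A (x k - xb)))\<^sup>2
      + \<sigma> * (2 - \<rho>) * (norm (adjoint A (x k - xb)))\<^sup>2
    - ((1 / (\<sigma> * \<rho>)) * (norm ((z (Suc k) - zb) + (\<sigma> * (\<rho> - 1)) *\<^sub>R adjoint A (x (Suc k) - xb)))\<^sup>2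
      + \<sigma> * (2 - \<rho>) * (norm (adjoint A (x (Suc k) - xb)))\<^sup>2)
    = \<sigma> * (2 - \<rho>) * (norm (adjoint A (x k) + adjoint B (y k) - c))\<^sup>2
      - 2 * ((z (Suc k) - zb) \<bullet> adjoint A (x (Suc k) - xb))
      - 2 * ((z k + \<sigma> *\<^sub>R (adjoint A (x k) + adjoint B (y k) - c) - zb) \<bullet> adjoint B (y k - yb))"
proof (rule multiplier_residual_identity[OF \<sigma> \<rho>])
  note lin = linear_diff[OF adjoint_linear[OF linA]] linear_diff[OF adjoint_linear[OF linB]]
    linear_add[OF adjoint_linear[OF linB]] linear_cmul[OF adjoint_linear[OF linB]]
  show "z k - zb = (zt k - zb) + \<sigma> *\<^sub>R (adjoint A (x k - xb) + adjoint B (yt k - yb))"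
    unfolding zstep feasible[symmetric] by (simp add: lin algebra_simps)
  show "z (Suc k) - zb = (zt k - zb) + (\<rho> * \<sigma>) *\<^sub>R (adjoint A (x k - xb) + adjoint B (yt k - yb))
      + \<sigma> *\<^sub>R (adjoint A (x (Suc k) - xb) + adjoint B (yt k - yb)
        + \<rho> *\<^sub>R (adjoint B (y k - yb) - adjoint B (yt k - yb)))"
    unfolding zstep[of "Suc k"] relax_z relax_y zstep[of k] feasible[symmetric]
    by (simp add: lin algebra_simps)
  show "adjoint A (x k) + adjoint B (y k) - c = adjoint A (x k - xb) + adjoint B (y k - yb)"
    unfolding feasible[symmetric] by (simp add: lin algebra_simps)
qed


theorem lemma5:
  fixes f1 f2 :: "'x::euclidean_space \<Rightarrow> real" and Df :: "'x set"
    and h1 h2 :: "'y::euclidean_space \<Rightarrow> real" and Dh :: "'y set"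
    and gf1 :: "'x \<Rightarrow> 'x" and gh1 :: "'y \<Rightarrow> 'y"
    and A :: "'z::euclidean_space \<Rightarrow> 'x" and B :: "'z \<Rightarrow> 'y" and c :: 'z
    and Sf Sfh S :: "'x \<Rightarrow> 'x" and Sh Shh T :: "'y \<Rightarrow> 'y"
    and \<sigma> \<rho> :: real
    and x xt :: "nat \<Rightarrow> 'x" and y yt :: "nat \<Rightarrow> 'y" and z zt :: "nat \<Rightarrow> 'z"
    and xb :: 'x and yb :: 'y and zb :: 'z
  assumes f1: "smooth_convex f1 gf1" and h1: "smooth_convex h1 gh1"
    and f2: "closed_proper_convex Df f2" and h2: "closed_proper_convex Dh h2"
    and linA: "linear A" and linB: "linear B"
    and Sf: "psd_op Sf" and Sfh: "psd_op Sfh" and Sf_le: "psd_op (\<lambda>u. Sfh u - Sf u)"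
    and Sh: "psd_op Sh" and Shh: "psd_op Shh" and Sh_le: "psd_op (\<lambda>u. Shh u - Sh u)"
    and f1_bounds: "\<And>u u'. (1/2) * qf Sf (u - u') \<le> f1 u - f1 u' - (u - u') \<bullet> gf1 u'
                          \<and> f1 u - f1 u' - (u - u') \<bullet> gf1 u' \<le> (1/2) * qf Sfh (u - u')"
    and h1_bounds: "\<And>v v'. (1/2) * qf Sh (v - v') \<le> h1 v - h1 v' - (v - v') \<bullet> gh1 v'
                          \<and> h1 v - h1 v' - (v - v') \<bullet> gh1 v' \<le> (1/2) * qf Shh (v - v')"
    and CQ: "\<exists>x0 y0. (x0, y0) \<in> rel_interior (Df \<times> Dh) \<and> adjoint A x0 + adjoint B y0 = c"
    and sigma: "\<sigma> > 0" and rho: "0 < \<rho>" "\<rho> < 2"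
    and S: "psd_op S" and T: "psd_op T"
    and F_pd: "pd_op (\<lambda>u. Sfh u + S u + \<sigma> *\<^sub>R A (adjoint A u))"
    and H_pd: "pd_op (\<lambda>v. Shh v + T v + \<sigma> *\<^sub>R B (adjoint B v))"
    and init: "xt 0 \<in> Df" "yt 0 \<in> Dh"
    and xstep: "\<And>k. is_argmin_on Df
       (\<lambda>u. f2 u + (1/2) * (u \<bullet> (Sfh u + S u + \<sigma> *\<^sub>R A (adjoint A u)))
          + (gf1 (xt k) + \<sigma> *\<^sub>R A (adjoint A (xt k) + adjoint B (yt k) - c + (1/\<sigma>) *\<^sub>R zt k)
             - (Sfh (xt k) + S (xt k) + \<sigma> *\<^sub>R A (adjoint A (xt k)))) \<bullet> u) (x k)"
    and zstep: "\<And>k. z k = zt k + \<sigma> *\<^sub>R (adjoint A (x k) + adjoint B (yt k) - c)"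
    and ystep: "\<And>k. is_argmin_on Dh
       (\<lambda>v. h2 v + (1/2) * (v \<bullet> (Shh v + T v + \<sigma> *\<^sub>R B (adjoint B v)))
          + (gh1 (yt k) + \<sigma> *\<^sub>R B (adjoint A (x k) + adjoint B (yt k) - c + (1/\<sigma>) *\<^sub>R z k)
             - (Shh (yt k) + T (yt k) + \<sigma> *\<^sub>R B (adjoint B (yt k)))) \<bullet> v) (y k)"
    and relax: "\<And>k. xt (Suc k) = xt k + \<rho> *\<^sub>R (x k - xt k)"
               "\<And>k. yt (Suc k) = yt k + \<rho> *\<^sub>R (y k - yt k)"
               "\<And>k. zt (Suc k) = zt k + \<rho> *\<^sub>R (z k - zt k)"
    and KKT: "- (gf1 xb + A zb) \<in> subdiff Df f2 xb"
             "- (gh1 yb + B zb) \<in> subdiff Dh h2 yb"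
             "adjoint A xb + adjoint B yb = c"
  shows "let \<Psi> = (\<lambda>k. (1 / (\<sigma> * \<rho>)) * (norm ((z k - zb) + (\<sigma> * (\<rho> - 1)) *\<^sub>R adjoint A (x k - xb)))\<^sup>2
                 + \<sigma> * (2 - \<rho>) * (norm (adjoint A (x k - xb)))\<^sup>2
                 + (1 / \<rho>) * qf (\<lambda>u. Sfh u + S u) (xt (Suc k) - xb)
                 + (1 / \<rho>) * qf (\<lambda>v. Shh v + T v) (yt k - yb));
             \<theta> = (\<lambda>k. qf (\<lambda>u. (1/2) *\<^sub>R Sf u - Sfh u + (2 - \<rho>) *\<^sub>R (Sfh u + S u)) (xt (Suc k) - x (Suc k))
                 + qf (\<lambda>v. (1/2) *\<^sub>R Sh v - Shh v + (2 - \<rho>) *\<^sub>R (Shh v + T v)) (yt k - y k))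
         in \<forall>k. \<Psi> k - \<Psi> (Suc k) \<ge> \<theta> k + \<sigma> * (2 - \<rho>) * (norm (adjoint A (x k) + adjoint B (y k) - c))\<^sup>2"
proof -
  \<comment> \<open>The constraint qualification only serves to make the KKT set nonempty.\<close>
  have lSfh: "linear Sfh" and lShh: "linear Shh"
    using Sfh Shh by (simp_all add: psd_op_self_adjoint self_adjoint_op_linear)
  have P: "self_adjoint_op (\<lambda>u. Sfh u + S u)" and Q: "self_adjoint_op (\<lambda>v. Shh v + T v)"
    using Sfh S Shh T by (simp_all add: psd_op_self_adjoint self_adjoint_op_add)
  have F: "self_adjoint_op (\<lambda>u. Sfh u + S u + \<sigma> *\<^sub>R A (adjoint A u))"
    and H: "self_adjoint_op (\<lambda>v. Shh v + T v + \<sigma> *\<^sub>R B (adjoint B v))"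
    using F_pd H_pd by (simp_all add: pd_op_def)
  have cf2: "convex Df" "convex_on Df f2" and ch2: "convex Dh" "convex_on Dh h2"
    using f2 h2 by (simp_all add: closed_proper_convex_def)
  have \<sigma>: "\<sigma> \<noteq> 0" and \<rho>: "\<rho> \<noteq> 0" using sigma rho by auto
  note linAB = linear_diff[OF adjoint_linear[OF linA]] linear_diff[OF adjoint_linear[OF linB]]
  \<comment> \<open>The x-block is used at step k+1 and the y-block at step k, matching the indices in \<open>\<Psi>\<close>.\<close>
  have x_descent: "qf (\<lambda>u. (1/2) *\<^sub>R Sf u - Sfh u + (2 - \<rho>) *\<^sub>R (Sfh u + S u)) (xt (Suc k) - x (Suc k))
      + 2 * ((z (Suc k) - zb) \<bullet> adjoint A (x (Suc k) - xb))
    \<le> (1/\<rho>) * qf (\<lambda>u. Sfh u + S u) (xt (Suc k) - xb)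
      - (1/\<rho>) * qf (\<lambda>u. Sfh u + S u) (xt (Suc (Suc k)) - xb)" for k
  proof -
    have "adjoint A (xt (Suc k)) + adjoint B (yt (Suc k)) - c + adjoint A (x (Suc k) - xt (Suc k))
        = adjoint A (x (Suc k)) + adjoint B (yt (Suc k)) - c"
      by (simp add: linAB)
    from linearized_prox_step_descent[OF cf2 linA Sf lSfh P F \<sigma> \<rho> f1_bounds xstep[of "Suc k"] this KKT(1)]
    show ?thesis by (simp only: zstep[symmetric] relax(1)[symmetric])
  qed
  have y_descent: "qf (\<lambda>v. (1/2) *\<^sub>R Sh v - Shh v + (2 - \<rho>) *\<^sub>R (Shh v + T v)) (yt k - y k)
      + 2 * ((z k + \<sigma> *\<^sub>R (adjoint A (x k) + adjoint B (y k) - c) - zb) \<bullet> adjoint B (y k - yb))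
    \<le> (1/\<rho>) * qf (\<lambda>v. Shh v + T v) (yt k - yb) - (1/\<rho>) * qf (\<lambda>v. Shh v + T v) (yt (Suc k) - yb)" for k
  proof -
    have "adjoint A (x k) + adjoint B (yt k) - c + adjoint B (y k - yt k)
        = adjoint A (x k) + adjoint B (y k) - c"
      by (simp add: linAB)
    from linearized_prox_step_descent[OF ch2 linB Sh lShh Q H \<sigma> \<rho> h1_bounds ystep[of k] this KKT(2)]
    show ?thesis by (simp only: relax(2)[symmetric])
  qed
  note multipliers = gadmm_multiplier_identity[where z = z and zt = zt and x = x and y = y and yt = yt and zb = zb,
      OF linA linB \<sigma> \<rho> zstep relax(2,3) KKT(3)]
  show ?thesis
    unfolding Let_def
    apply (intro allI)
    subgoal for k using x_descent[of k] y_descent[of k] multipliers[where k = k] by linarith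
    done
qed

end
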